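(* Let $(L,\Delta)$ be a differential field extending $k$, and let $R$ be a $\Delta$-subring of $L$ containing $k$. Suppose $e:R\to\mathcal D(L)$ is a $k$-linear homomorphism of $\Delta$-rings such that for every $i=0,1,\dots,t$ the map $\pi_i^L\circ e:R\to L$ is injective. Then $e$ extends uniquely to a homomorphism of $\Delta$-rings $\operatorname{Frac}(R)\to\mathcal D(L)$ (where $\operatorname{Frac}(R)\subseteq L$ carries the induced derivations).
   Context: Fix a field $k$ of characteristic zero, a finite-dimensional commutative $k$-algebra $B$ such that $B/\mathfrak n=k$ for every maximal ideal $\mathfrak n$ of $B$, a $k$-algebra homomorphism $\pi:B\to k$, and a $k$-basis $(\epsilon_0,\dots,\epsilon_\ell)$ of $B$ with $\pi(\epsilon_0)=1$, $\pi(\epsilon_i)=0$ for $i\neq0$. $\Delta=\{\delta_1,\dots,\delta_m\}$ denotes commuting $k$-linear derivations. For a $k$-algebra $R$, $\mathcal D(R):=B\otimes_kR$; if $R$ has derivations $\Delta$, $\mathcal D(R)$ is a $\Delta$-ring via $\delta_j(b\otimes r)=b\otimes\delta_j(r)$. Write $B=\prod_{i=0}^tB_i$ as a product of local $k$-algebras, let $\pi_i:B\to k$ be the projection onto $B_i$ followed by the residue map $B_i\to k$ (indexed so $\pi_0=\pi$), and let $\pi_i^R:\mathcal D(R)\to R$ be its base change to $R$. *)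

theory Defs
  imports Main
begin

text \<open>
L is a type 'L of class field, and k is
embedded in L by a ring homomorphism iota.  The base change D(L) = B (x)_k L is represented
by coordinates w.r.t. the k-basis eps 0, ..., eps ell of B, i.e. by functions
nat => 'L vanishing above ell; x represents the sum of eps i (x) x i.
\<close>

definition is_ring_ideal :: "'b::comm_ring_1 set \<Rightarrow> bool" where
  "is_ring_ideal I \<longleftrightarrow> 0 \<in> I \<and> (\<forall>x\<in>I. \<forall>y\<in>I. x + y \<in> I) \<and> (\<forall>x\<in>I. - x \<in> I)
     \<and> (\<forall>a. \<forall>x\<in>I. a * x \<in> I)"

definition is_maximal_ideal :: "'b::comm_ring_1 set \<Rightarrow> bool" where
  "is_maximal_ideal I \<longleftrightarrow> is_ring_ideal I \<and> I \<noteq> UNIV \<and>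
     (\<forall>J. is_ring_ideal J \<and> I \<subseteq> J \<longrightarrow> J = I \<or> J = UNIV)"

definition is_k_algebra :: "('k::field \<Rightarrow> 'b::comm_ring_1 \<Rightarrow> 'b) \<Rightarrow> bool" where
  "is_k_algebra sB \<longleftrightarrow>
     (\<forall>a b x. sB (a + b) x = sB a x + sB b x) \<and>
     (\<forall>a x y. sB a (x + y) = sB a x + sB a y) \<and>
     (\<forall>a b x. sB (a * b) x = sB a (sB b x)) \<and>
     (\<forall>x. sB 1 x = x) \<and>
     (\<forall>a x y. sB a (x * y) = sB a x * y)"

definition is_k_basis :: "('k::field \<Rightarrow> 'b::comm_ring_1 \<Rightarrow> 'b) \<Rightarrow> (nat \<Rightarrow> 'b) \<Rightarrow> nat \<Rightarrow> bool" where
  "is_k_basis sB eps ell \<longleftrightarrow>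
     (\<forall>b. \<exists>!c. (\<forall>i>ell. c i = 0) \<and> b = (\<Sum>i\<le>ell. sB (c i) (eps i)))"

definition B_coord :: "('k::field \<Rightarrow> 'b::comm_ring_1 \<Rightarrow> 'b) \<Rightarrow> (nat \<Rightarrow> 'b) \<Rightarrow> nat \<Rightarrow> 'b \<Rightarrow> nat \<Rightarrow> 'k" where
  "B_coord sB eps ell b = (THE c. (\<forall>i>ell. c i = 0) \<and> b = (\<Sum>i\<le>ell. sB (c i) (eps i)))"

definition is_k_alg_hom :: "('k::field \<Rightarrow> 'b::comm_ring_1 \<Rightarrow> 'b) \<Rightarrow> ('b \<Rightarrow> 'k) \<Rightarrow> bool" where
  "is_k_alg_hom sB \<phi> \<longleftrightarrow> (\<forall>x y. \<phi> (x + y) = \<phi> x + \<phi> y) \<and> (\<forall>x y. \<phi> (x * y) = \<phi> x * \<phi> y)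
     \<and> \<phi> 1 = 1 \<and> (\<forall>c x. \<phi> (sB c x) = c * \<phi> x)"

definition is_ring_hom :: "('k::ring_1 \<Rightarrow> 'L::ring_1) \<Rightarrow> bool" where
  "is_ring_hom \<iota> \<longleftrightarrow> (\<forall>a b. \<iota> (a + b) = \<iota> a + \<iota> b) \<and> (\<forall>a b. \<iota> (a * b) = \<iota> a * \<iota> b) \<and> \<iota> 1 = 1"

definition is_k_Delta_field :: "('k \<Rightarrow> 'L::field) \<Rightarrow> nat \<Rightarrow> (nat \<Rightarrow> 'L \<Rightarrow> 'L) \<Rightarrow> bool" where
  "is_k_Delta_field \<iota> m d \<longleftrightarrow>
     (\<forall>j<m. (\<forall>a b. d j (a + b) = d j a + d j b) \<and>
            (\<forall>a b. d j (a * b) = a * d j b + d j a * b) \<and>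
            (\<forall>c a. d j (\<iota> c * a) = \<iota> c * d j a)) \<and>
     (\<forall>j<m. \<forall>l<m. \<forall>a. d j (d l a) = d l (d j a))"

definition is_Delta_subring_over_k :: "('k \<Rightarrow> 'L::field) \<Rightarrow> nat \<Rightarrow> (nat \<Rightarrow> 'L \<Rightarrow> 'L) \<Rightarrow> 'L set \<Rightarrow> bool" where
  "is_Delta_subring_over_k \<iota> m d R \<longleftrightarrow>
     0 \<in> R \<and> 1 \<in> R \<and> (\<forall>x\<in>R. \<forall>y\<in>R. x + y \<in> R \<and> x * y \<in> R) \<and> (\<forall>x\<in>R. - x \<in> R) \<and>
     range \<iota> \<subseteq> R \<and> (\<forall>j<m. \<forall>x\<in>R. d j x \<in> R)"

definition Frac_in :: "'L::field set \<Rightarrow> 'L set" where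
  "Frac_in R = {a / b | a b. a \<in> R \<and> b \<in> R \<and> b \<noteq> 0}"

definition D_carrier :: "nat \<Rightarrow> (nat \<Rightarrow> 'L::field) set" where
  "D_carrier ell = {x. \<forall>i>ell. x i = 0}"

definition D_add :: "(nat \<Rightarrow> 'L::field) \<Rightarrow> (nat \<Rightarrow> 'L) \<Rightarrow> nat \<Rightarrow> 'L" where
  "D_add x y = (\<lambda>i. x i + y i)"

definition D_mult :: "('k::field \<Rightarrow> 'L::field) \<Rightarrow> ('k \<Rightarrow> 'b::comm_ring_1 \<Rightarrow> 'b) \<Rightarrow> (nat \<Rightarrow> 'b) \<Rightarrow> nat
    \<Rightarrow> (nat \<Rightarrow> 'L) \<Rightarrow> (nat \<Rightarrow> 'L) \<Rightarrow> nat \<Rightarrow> 'L" where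
  "D_mult \<iota> sB eps ell x y =
     (\<lambda>n. \<Sum>i\<le>ell. \<Sum>j\<le>ell. \<iota> (B_coord sB eps ell (eps i * eps j) n) * x i * y j)"

definition D_one :: "('k::field \<Rightarrow> 'L::field) \<Rightarrow> ('k \<Rightarrow> 'b::comm_ring_1 \<Rightarrow> 'b) \<Rightarrow> (nat \<Rightarrow> 'b) \<Rightarrow> nat
    \<Rightarrow> nat \<Rightarrow> 'L" where
  "D_one \<iota> sB eps ell = (\<lambda>n. \<iota> (B_coord sB eps ell 1 n))"

definition D_smult :: "('k \<Rightarrow> 'L::field) \<Rightarrow> 'k \<Rightarrow> (nat \<Rightarrow> 'L) \<Rightarrow> nat \<Rightarrow> 'L" where
  "D_smult \<iota> c x = (\<lambda>i. \<iota> c * x i)"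

text \<open>delta (b (x) r) = b (x) delta r.\<close>
definition D_der :: "('L::field \<Rightarrow> 'L) \<Rightarrow> (nat \<Rightarrow> 'L) \<Rightarrow> nat \<Rightarrow> 'L" where
  "D_der \<delta> x = (\<lambda>i. \<delta> (x i))"

text \<open>Base change phi^L : D(L) -> L of a k-algebra map phi : B -> k.\<close>
definition base_change :: "('k::field \<Rightarrow> 'L::field) \<Rightarrow> (nat \<Rightarrow> 'b) \<Rightarrow> nat \<Rightarrow> ('b \<Rightarrow> 'k)
    \<Rightarrow> (nat \<Rightarrow> 'L) \<Rightarrow> 'L" where
  "base_change \<iota> eps ell \<phi> x = (\<Sum>i\<le>ell. \<iota> (\<phi> (eps i)) * x i)"

definition is_Delta_hom_to_D :: "('k::field \<Rightarrow> 'L::field) \<Rightarrow> ('k \<Rightarrow> 'b::comm_ring_1 \<Rightarrow> 'b) \<Rightarrow> (nat \<Rightarrow> 'b)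
    \<Rightarrow> nat \<Rightarrow> nat \<Rightarrow> (nat \<Rightarrow> 'L \<Rightarrow> 'L) \<Rightarrow> 'L set \<Rightarrow> ('L \<Rightarrow> nat \<Rightarrow> 'L) \<Rightarrow> bool" where
  "is_Delta_hom_to_D \<iota> sB eps ell m d S f \<longleftrightarrow>
     (\<forall>x\<in>S. f x \<in> D_carrier ell) \<and>
     (\<forall>x\<in>S. \<forall>y\<in>S. f (x + y) = D_add (f x) (f y)) \<and>
     (\<forall>x\<in>S. \<forall>y\<in>S. f (x * y) = D_mult \<iota> sB eps ell (f x) (f y)) \<and>
     f 1 = D_one \<iota> sB eps ell \<and>
     (\<forall>j<m. \<forall>x\<in>S. f (d j x) = D_der (d j) (f x))"

end

theory Submission
  imports Defs "HOL.Vector_Spaces"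
begin

text \<open>The point is that \<open>e\<close> maps every nonzero \<open>r \<in> R\<close> to a unit of \<open>D(L)\<close>. Otherwise \<open>e r\<close> lies
  in a prime ideal \<open>M\<close> of \<open>D(L)\<close>. Its trace on \<open>B\<close> is a prime ideal of a finite-dimensional
  \<open>k\<close>-algebra, hence maximal, hence (all residue fields being \<open>k\<close>) the kernel of a \<open>k\<close>-algebra
  map \<open>\<phi> : B \<rightarrow> k\<close>. Then \<open>e r \<equiv> \<phi>\<^sup>L (e r)\<close> modulo \<open>M\<close>, so the scalar \<open>\<phi>\<^sup>L (e r)\<close> vanishes,
  contradicting the injectivity of \<open>\<phi>\<^sup>L \<circ> e\<close>. Hence \<open>a / b \<mapsto> e a \<cdot> (e b)\<^sup>-\<^sup>1\<close> is forced and well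
  defined; it is a ring homomorphism because \<open>D(L)\<close> is commutative, and it commutes with the
  derivations, which act coefficientwise on \<open>D(L)\<close>, by the quotient rule.\<close>

section \<open>Finite-dimensional \<open>k\<close>-algebras\<close>

definition is_prime_ideal :: "'b::comm_ring_1 set \<Rightarrow> bool" where
  "is_prime_ideal P \<longleftrightarrow> is_ring_ideal P \<and> 1 \<notin> P \<and> (\<forall>x y. x * y \<in> P \<longrightarrow> x \<in> P \<or> y \<in> P)"

lemma ring_ideal_diff: "is_ring_ideal I \<Longrightarrow> x \<in> I \<Longrightarrow> y \<in> I \<Longrightarrow> x - y \<in> I"
  unfolding is_ring_ideal_def by (metis diff_conv_add_uminus)

lemma ring_ideal_eq_UNIV: "is_ring_ideal I \<Longrightarrow> 1 \<in> I \<Longrightarrow> I = UNIV"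
  unfolding is_ring_ideal_def by (metis UNIV_eq_I mult_1_right)

locale finite_k_algebra =
  fixes sB :: "'k::field \<Rightarrow> 'b::comm_ring_1 \<Rightarrow> 'b"
    and eps :: "nat \<Rightarrow> 'b" and ell :: nat
  assumes B_alg: "is_k_algebra sB"
    and B_basis: "is_k_basis sB eps ell"
begin

lemma sB_add_left: "sB (a + b) x = sB a x + sB b x"
  and sB_add_right: "sB a (x + y) = sB a x + sB a y"
  and sB_sB: "sB a (sB b x) = sB (a * b) x"
  and sB_one: "sB 1 x = x"
  and sB_mult_left: "sB a (x * y) = sB a x * y"
  using B_alg by (simp_all add: is_k_algebra_def)

lemma sB_mult_right: "sB a (x * y) = x * sB a y"
  by (metis mult.commute sB_mult_left)

lemma sB_eq_mult: "sB a x = sB a 1 * x"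
  by (metis sB_mult_left mult_1)

sublocale vs: vector_space sB
  by unfold_locales (simp_all add: sB_add_left sB_add_right sB_sB sB_one)

abbreviation coord :: "'b \<Rightarrow> nat \<Rightarrow> 'k" where
  "coord \<equiv> B_coord sB eps ell"

lemma coord_ex1: "\<exists>!c. (\<forall>i>ell. c i = 0) \<and> b = (\<Sum>i\<le>ell. sB (c i) (eps i))"
  using B_basis by (simp add: is_k_basis_def)

lemma coord_eq_0: "i > ell \<Longrightarrow> coord b i = 0"
  and sum_coord: "(\<Sum>i\<le>ell. sB (coord b i) (eps i)) = b"
  using theI'[OF coord_ex1[of b]] unfolding B_coord_def by auto

lemma coord_unique: "(\<forall>i>ell. c i = 0) \<Longrightarrow> b = (\<Sum>i\<le>ell. sB (c i) (eps i)) \<Longrightarrow> coord b = c"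
  unfolding B_coord_def by (rule the1_equality[OF coord_ex1]) auto

lemma coord_add: "coord (x + y) n = coord x n + coord y n"
proof -
  have "coord (x + y) = (\<lambda>n. coord x n + coord y n)"
  proof (rule coord_unique)
    show "x + y = (\<Sum>i\<le>ell. sB (coord x i + coord y i) (eps i))"
      by (simp add: sB_add_left sum.distrib sum_coord)
  qed (simp add: coord_eq_0)
  thus ?thesis by simp
qed

lemma coord_0: "coord 0 n = 0"
  using coord_unique[of "\<lambda>_. 0" 0] by simp

lemma coord_diff: "coord (x - y) n = coord x n - coord y n"
  using coord_add[of "x - y" y n] by simp

lemma coord_sum: "coord (sum f A) n = (\<Sum>j\<in>A. coord (f j) n)"
  by (induction A rule: infinite_finite_induct) (simp_all add: coord_0 coord_add)

lemma coord_sB: "coord (sB a x) n = a * coord x n"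
proof -
  have "coord (sB a x) = (\<lambda>n. a * coord x n)"
  proof (rule coord_unique)
    have "sB a x = sB a (\<Sum>i\<le>ell. sB (coord x i) (eps i))"
      by (simp add: sum_coord)
    then show "sB a x = (\<Sum>i\<le>ell. sB (a * coord x i) (eps i))"
      by (simp add: vs.scale_sum_right sB_sB)
  qed (simp add: coord_eq_0)
  thus ?thesis by simp
qed

lemma coord_eps: "j \<le> ell \<Longrightarrow> coord (eps j) n = of_bool (n = j)"
proof -
  assume j: "j \<le> ell"
  have "coord (eps j) = (\<lambda>n. of_bool (n = j))"
  proof (rule coord_unique)
    show "eps j = (\<Sum>i\<le>ell. sB (of_bool (i = j)) (eps i))"
    proof -
      have "(\<lambda>i. sB (of_bool (i = j)) (eps i)) = (\<lambda>i. if i = j then eps j else 0)"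
        by (auto simp: sB_one vs.scale_zero_left)
      then show ?thesis using j by (simp only:) simp
    qed
  qed (use j in simp)
  thus ?thesis by simp
qed

definition struct_const :: "nat \<Rightarrow> nat \<Rightarrow> nat \<Rightarrow> 'k" where
  "struct_const i j n = coord (eps i * eps j) n"

lemma coord_mult:
  "coord (x * y) n = (\<Sum>i\<le>ell. \<Sum>j\<le>ell. coord x i * coord y j * struct_const i j n)"
proof -
  have "x * y = (\<Sum>i\<le>ell. sB (coord x i) (eps i)) * (\<Sum>j\<le>ell. sB (coord y j) (eps j))"
    by (simp add: sum_coord)
  also have "\<dots> = (\<Sum>i\<le>ell. \<Sum>j\<le>ell. sB (coord x i * coord y j) (eps i * eps j))"
    unfolding sum_product by (intro sum.cong refl) (metis sB_mult_left sB_mult_right sB_sB)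
  finally show ?thesis
    by (simp add: coord_sum coord_sB struct_const_def)
qed

lemma struct_const_comm: "struct_const i j n = struct_const j i n"
  by (simp add: struct_const_def mult.commute)

lemma struct_const_eq_0: "n > ell \<Longrightarrow> struct_const i j n = 0"
  by (simp add: struct_const_def coord_eq_0)

lemma coord_eps_mult:
  "i \<le> ell \<Longrightarrow> coord (eps i * y) n = (\<Sum>j\<le>ell. coord y j * struct_const i j n)"
  by (simp add: coord_mult coord_eps mult.assoc flip: sum_distrib_left)

lemma struct_const_assoc:
  assumes "i \<le> ell" "p \<le> ell" "q \<le> ell"
  shows "(\<Sum>j\<le>ell. struct_const p q j * struct_const i j n)
       = (\<Sum>j\<le>ell. struct_const i p j * struct_const j q n)"
proof -
  have "coord (eps i * (eps p * eps q)) n = (\<Sum>j\<le>ell. struct_const p q j * struct_const i j n)"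
    using coord_eps_mult[of i "eps p * eps q" n] assms by (simp add: struct_const_def)
  moreover have "coord (eps q * (eps i * eps p)) n = (\<Sum>j\<le>ell. struct_const i p j * struct_const j q n)"
    using coord_eps_mult[of q "eps i * eps p" n] assms by (simp add: struct_const_def mult.commute)
  ultimately show ?thesis by (simp add: ac_simps)
qed

lemma coord_one_struct_const:
  "j \<le> ell \<Longrightarrow> (\<Sum>i\<le>ell. coord 1 i * struct_const i j n) = of_bool (n = j)"
  using coord_eps_mult[of j 1 n] by (simp add: coord_eps struct_const_comm[of j])

lemma ring_ideal_sB: "is_ring_ideal I \<Longrightarrow> x \<in> I \<Longrightarrow> sB c x \<in> I"
  by (metis sB_eq_mult is_ring_ideal_def)

lemma scalar_in_proper_ideal_eq_0:
  assumes I: "is_ring_ideal I" "1 \<notin> I" and c: "sB c 1 \<in> I"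
  shows "c = 0"
proof (rule ccontr)
  assume "c \<noteq> 0"
  then have "sB (inverse c) (sB c 1) = 1" by (simp add: sB_sB sB_one)
  then show False using ring_ideal_sB[OF I(1) c, of "inverse c"] I(2) by simp
qed

lemma powers_linearly_dependent:
  "\<exists>a. (\<Sum>j\<le>Suc ell. sB (a j) (b ^ j)) = 0 \<and> (\<exists>j\<le>Suc ell. a j \<noteq> 0)"
proof (cases "inj_on (\<lambda>j. b ^ j) {..Suc ell}")
  case True
  define S where "S = (\<lambda>j. b ^ j) ` {..Suc ell}"
  have "vs.dependent S"
  proof (rule ccontr)
    assume ind: "vs.independent S"
    have "x \<in> vs.span (eps ` {..ell})" for x
      by (subst sum_coord[symmetric]) (intro vs.span_sum vs.span_scale vs.span_base; simp)
    then have "card S \<le> card (eps ` {..ell})"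
      using vs.independent_span_bound[OF _ ind, of "eps ` {..ell}"] by blast
    also have "\<dots> \<le> Suc ell"
      using card_image_le[of "{..ell}" eps] by simp
    finally show False
      using True by (simp add: S_def card_image)
  qed
  then obtain u where u: "\<exists>v\<in>S. u v \<noteq> 0" "(\<Sum>v\<in>S. sB (u v) v) = 0"
    using vs.dependent_finite[of S] by (auto simp: S_def)
  have "(\<Sum>j\<le>Suc ell. sB (u (b ^ j)) (b ^ j)) = 0"
    using u(2) True by (simp add: S_def sum.reindex)
  moreover have "\<exists>j\<le>Suc ell. u (b ^ j) \<noteq> 0"
    using u(1) by (auto simp: S_def)
  ultimately show ?thesis by (intro exI[of _ "\<lambda>j. u (b ^ j)"]) simp
next
  case False
  then obtain i j where ij: "i \<le> Suc ell" "j \<le> Suc ell" "i \<noteq> j" "b ^ i = b ^ j"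
    unfolding inj_on_def by auto
  define a :: "nat \<Rightarrow> 'k" where "a k = of_bool (k = i) - of_bool (k = j)" for k
  have "(\<Sum>k\<le>Suc ell. sB (a k) (b ^ k)) = b ^ i - b ^ j"
  proof -
    have "(\<lambda>k. sB (a k) (b ^ k)) = (\<lambda>k. (if k = i then b ^ i else 0) - (if k = j then b ^ j else 0))"
      by (auto simp: a_def vs.scale_left_diff_distrib sB_one vs.scale_zero_left)
    then show ?thesis using ij by (simp only:) (simp add: sum_subtractf)
  qed
  then show ?thesis using ij by (intro exI[of _ a]) (auto simp: a_def)
qed

text \<open>If \<open>b\<close> is a root modulo the prime \<open>P\<close> of a nonzero polynomial, divide off powers of \<open>b\<close>
  until the constant term is nonzero; that term is then a unit, which inverts \<open>b\<close> modulo \<open>P\<close>.\<close>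
lemma invertible_mod_prime_ideal_of_root:
  fixes P :: "'b set"
  assumes P: "is_prime_ideal P" and b: "b \<notin> P"
  shows "(\<Sum>j\<le>N. sB (a j) (b ^ j)) \<in> P \<Longrightarrow> \<exists>j\<le>N. a j \<noteq> 0 \<Longrightarrow> \<exists>b'. b * b' - 1 \<in> P"
proof (induction N arbitrary: a)
  case 0
  then show ?case using scalar_in_proper_ideal_eq_0 P by (auto simp: is_prime_ideal_def)
next
  case (Suc N)
  define s where "s = (\<Sum>j\<le>N. sB (a (Suc j)) (b ^ j))"
  have eq: "(\<Sum>j\<le>Suc N. sB (a j) (b ^ j)) = sB (a 0) 1 + b * s"
    by (subst sum.atMost_Suc_shift) (simp add: s_def sum_distrib_left sB_mult_right)
  show ?case
  proof (cases "a 0 = 0")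
    case False
    have PI: "is_ring_ideal P" using P by (simp add: is_prime_ideal_def)
    have "sB (a 0) 1 + b * s \<in> P" using Suc.prems(1) eq by simp
    then have "- sB (inverse (a 0)) (sB (a 0) 1 + b * s) \<in> P"
      using ring_ideal_sB[OF PI] PI unfolding is_ring_ideal_def by blast
    moreover have "- sB (inverse (a 0)) (sB (a 0) 1 + b * s) = b * (- sB (inverse (a 0)) s) - 1"
      using False by (simp add: sB_add_right sB_sB sB_one sB_mult_right)
    ultimately show ?thesis by (metis (no_types))
  next
    case True
    then have "b * s \<in> P" using Suc.prems(1) eq by (simp add: vs.scale_zero_left)
    then have "s \<in> P" using P b unfolding is_prime_ideal_def by blast
    moreover have "\<exists>j\<le>N. a (Suc j) \<noteq> 0"
      using Suc.prems(2) True by (metis Suc_le_mono not0_implies_Suc)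
    ultimately show ?thesis by (rule Suc.IH[of "\<lambda>j. a (Suc j)", folded s_def])
  qed
qed

lemma prime_ideal_is_maximal:
  fixes P :: "'b set"
  assumes P: "is_prime_ideal P"
  shows "is_maximal_ideal P"
  unfolding is_maximal_ideal_def
proof (intro conjI allI impI)
  show "is_ring_ideal P" using P by (simp add: is_prime_ideal_def)
  show "P \<noteq> UNIV" using P by (auto simp: is_prime_ideal_def)
  fix J assume J: "is_ring_ideal J \<and> P \<subseteq> J"
  show "J = P \<or> J = UNIV"
  proof (cases "J = P")
    case False
    then obtain b where b: "b \<in> J" "b \<notin> P" using J by blast
    obtain a where a: "(\<Sum>j\<le>Suc ell. sB (a j) (b ^ j)) = 0" "\<exists>j\<le>Suc ell. a j \<noteq> 0"
      using powers_linearly_dependent by blast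
    have "(\<Sum>j\<le>Suc ell. sB (a j) (b ^ j)) \<in> P"
      using a(1) P unfolding is_prime_ideal_def is_ring_ideal_def by metis
    then obtain b' where "b * b' - 1 \<in> P"
      using invertible_mod_prime_ideal_of_root[OF P b(2)] a(2) by blast
    moreover have "b * b' \<in> J"
      using J b(1) by (metis is_ring_ideal_def mult.commute)
    ultimately have "b * b' - (b * b' - 1) \<in> J"
      using J ring_ideal_diff by blast
    then show ?thesis using J ring_ideal_eq_UNIV by auto
  qed simp
qed

lemma residue_map_exists:
  fixes P :: "'b set"
  assumes P: "is_ring_ideal P" "1 \<notin> P" and res: "\<forall>b. \<exists>c. b - sB c 1 \<in> P"
  shows "\<exists>\<phi>. is_k_alg_hom sB \<phi> \<and> (\<forall>b. b - sB (\<phi> b) 1 \<in> P)"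
proof -
  define \<phi> where "\<phi> b = (SOME c. b - sB c 1 \<in> P)" for b
  have mem: "b - sB (\<phi> b) 1 \<in> P" for b
    unfolding \<phi>_def using res by (metis someI_ex)
  have unique: "\<phi> b = c" if "b - sB c 1 \<in> P" for b c
  proof -
    have "sB (\<phi> b - c) 1 = (b - sB c 1) - (b - sB (\<phi> b) 1)"
      by (simp add: vs.scale_left_diff_distrib)
    then have "sB (\<phi> b - c) 1 \<in> P"
      using ring_ideal_diff[OF P(1) that mem[of b]] by simp
    then have "\<phi> b - c = 0" by (rule scalar_in_proper_ideal_eq_0[OF P])
    then show ?thesis by simp
  qed
  have sB_1_mult: "sB a 1 * sB c 1 = sB (a * c) 1" for a c
    by (metis mult_1 sB_mult_left sB_sB)
  have "is_k_alg_hom sB \<phi>"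
    unfolding is_k_alg_hom_def
  proof (intro conjI allI)
    fix x y
    have "(x - sB (\<phi> x) 1) + (y - sB (\<phi> y) 1) \<in> P"
      using P mem by (simp add: is_ring_ideal_def)
    then show "\<phi> (x + y) = \<phi> x + \<phi> y"
      by (intro unique) (simp add: sB_add_left algebra_simps)
    have "(x - sB (\<phi> x) 1) * y + sB (\<phi> x) 1 * (y - sB (\<phi> y) 1) \<in> P"
      using P mem by (simp add: is_ring_ideal_def mult.commute)
    then show "\<phi> (x * y) = \<phi> x * \<phi> y"
      by (intro unique) (simp add: algebra_simps sB_1_mult)
  next
    show "\<phi> 1 = 1"
      using P by (intro unique) (simp add: sB_one is_ring_ideal_def)
  next
    fix c x
    have "sB c (x - sB (\<phi> x) 1) \<in> P"
      using ring_ideal_sB[OF P(1) mem] .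
    then show "\<phi> (sB c x) = c * \<phi> x"
      by (intro unique) (simp add: vs.scale_right_diff_distrib sB_sB)
  qed
  then show ?thesis using mem by blast
qed

end

section \<open>Derivations\<close>

definition is_k_derivation :: "('k \<Rightarrow> 'L::field) \<Rightarrow> ('L \<Rightarrow> 'L) \<Rightarrow> bool" where
  "is_k_derivation \<iota> \<delta> \<longleftrightarrow> (\<forall>a b. \<delta> (a + b) = \<delta> a + \<delta> b) \<and> (\<forall>a b. \<delta> (a * b) = a * \<delta> b + \<delta> a * b)
     \<and> (\<forall>c a. \<delta> (\<iota> c * a) = \<iota> c * \<delta> a)"

lemma is_k_Delta_field_derivation: "is_k_Delta_field \<iota> m d \<Longrightarrow> j < m \<Longrightarrow> is_k_derivation \<iota> (d j)"
  unfolding is_k_Delta_field_def is_k_derivation_def by blast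

context
  fixes \<iota> :: "'k \<Rightarrow> 'L::field" and \<delta> :: "'L \<Rightarrow> 'L"
  assumes \<delta>: "is_k_derivation \<iota> \<delta>"
begin

lemma derivation_add: "\<delta> (a + b) = \<delta> a + \<delta> b"
  and derivation_mult: "\<delta> (a * b) = a * \<delta> b + \<delta> a * b"
  and derivation_scalar: "\<delta> (\<iota> c * a) = \<iota> c * \<delta> a"
  using \<delta> unfolding is_k_derivation_def by blast+

lemma derivation_0: "\<delta> 0 = 0"
  using derivation_add[of 0 0] by (metis add_cancel_right_right)

lemma derivation_sum: "\<delta> (sum f A) = (\<Sum>a\<in>A. \<delta> (f a))"
  by (induction A rule: infinite_finite_induct) (simp_all add: derivation_0 derivation_add)

lemma derivation_quotient: "b \<noteq> 0 \<Longrightarrow> \<delta> (a / b) * (b * b) = b * \<delta> a - a * \<delta> b"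
  using derivation_mult[of "a / b" b] by (simp add: algebra_simps)

end

section \<open>The ring \<open>D(L) = B \<otimes>\<^sub>k L\<close>\<close>

lemma sum_rotate_3:
  "(\<Sum>a\<in>A. \<Sum>p\<in>A. \<Sum>q\<in>A. f a p q) = (\<Sum>p\<in>A. \<Sum>q\<in>A. \<Sum>a\<in>A. f a p q)"
proof -
  have "(\<Sum>a\<in>A. \<Sum>p\<in>A. \<Sum>q\<in>A. f a p q) = (\<Sum>p\<in>A. \<Sum>a\<in>A. \<Sum>q\<in>A. f a p q)"
    by (rule sum.swap)
  also have "\<dots> = (\<Sum>p\<in>A. \<Sum>q\<in>A. \<Sum>a\<in>A. f a p q)"
    by (rule sum.cong[OF refl], rule sum.swap)
  finally show ?thesis .
qed

lemma sum_swap_4: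
  "(\<Sum>a\<in>A. \<Sum>q\<in>A. \<Sum>i\<in>A. \<Sum>p\<in>A. f a q i p) = (\<Sum>i\<in>A. \<Sum>p\<in>A. \<Sum>q\<in>A. \<Sum>a\<in>A. f a q i p)"
proof -
  have "(\<Sum>a\<in>A. \<Sum>q\<in>A. \<Sum>i\<in>A. \<Sum>p\<in>A. f a q i p) = (\<Sum>a\<in>A. \<Sum>i\<in>A. \<Sum>p\<in>A. \<Sum>q\<in>A. f a q i p)"
    by (rule sum.cong[OF refl], rule sum_rotate_3)
  also have "\<dots> = (\<Sum>i\<in>A. \<Sum>p\<in>A. \<Sum>a\<in>A. \<Sum>q\<in>A. f a q i p)"
    by (rule sum_rotate_3)
  also have "\<dots> = (\<Sum>i\<in>A. \<Sum>p\<in>A. \<Sum>q\<in>A. \<Sum>a\<in>A. f a q i p)"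
    by (rule sum.cong[OF refl], rule sum.cong[OF refl], rule sum.swap)
  finally show ?thesis .
qed

lemma D_add_left_cancel: "D_add z x = D_add z y \<Longrightarrow> x = y"
  by (simp add: D_add_def fun_eq_iff)

locale base_change_ring = finite_k_algebra sB eps ell
  for sB :: "'k::field \<Rightarrow> 'b::comm_ring_1 \<Rightarrow> 'b" and eps ell +
  fixes \<iota> :: "'k \<Rightarrow> 'L::field"
  assumes k_in_L: "is_ring_hom \<iota>"
begin

lemma iota_add: "\<iota> (a + b) = \<iota> a + \<iota> b"
  and iota_mult: "\<iota> (a * b) = \<iota> a * \<iota> b"
  and iota_1: "\<iota> 1 = 1"
  using k_in_L by (simp_all add: is_ring_hom_def)

lemma iota_0: "\<iota> 0 = 0"
  using iota_add[of 0 0] by (metis add_cancel_right_right)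

lemma iota_minus: "\<iota> (- a) = - \<iota> a"
  using iota_add[of a "- a"] iota_0 by (simp add: add_eq_0_iff2)

lemma iota_diff: "\<iota> (a - b) = \<iota> a - \<iota> b"
  using iota_add[of a "- b"] by (simp add: iota_minus)

lemma iota_sum: "\<iota> (sum f A) = (\<Sum>a\<in>A. \<iota> (f a))"
  by (induction A rule: infinite_finite_induct) (simp_all add: iota_0 iota_add)

lemma iota_of_bool: "\<iota> (of_bool P) = of_bool P"
  by (simp add: iota_0 iota_1)

abbreviation dmult :: "(nat \<Rightarrow> 'L) \<Rightarrow> (nat \<Rightarrow> 'L) \<Rightarrow> nat \<Rightarrow> 'L" (infixl "\<odot>" 70) where
  "x \<odot> y \<equiv> D_mult \<iota> sB eps ell x y"

abbreviation D1 :: "nat \<Rightarrow> 'L" where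
  "D1 \<equiv> D_one \<iota> sB eps ell"

lemma D_mult_eq: "(x \<odot> y) n = (\<Sum>i\<le>ell. \<Sum>j\<le>ell. \<iota> (struct_const i j n) * x i * y j)"
  by (simp add: D_mult_def struct_const_def)

lemma D_mult_comm: "x \<odot> y = y \<odot> x"
proof
  fix n
  have "(x \<odot> y) n = (\<Sum>j\<le>ell. \<Sum>i\<le>ell. \<iota> (struct_const i j n) * x i * y j)"
    unfolding D_mult_eq by (rule sum.swap)
  then show "(x \<odot> y) n = (y \<odot> x) n"
    by (simp add: D_mult_eq struct_const_comm mult_ac)
qed

lemma D_mult_assoc: "x \<odot> y \<odot> z = x \<odot> (y \<odot> z)"
proof
  fix n
  have "(x \<odot> y \<odot> z) n = (\<Sum>a\<le>ell. \<Sum>q\<le>ell. \<Sum>i\<le>ell. \<Sum>p\<le>ell.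
      \<iota> (struct_const i p a) * \<iota> (struct_const a q n) * x i * y p * z q)"
    by (simp add: D_mult_eq sum_distrib_left sum_distrib_right mult_ac)
  also have "\<dots> = (\<Sum>i\<le>ell. \<Sum>p\<le>ell. \<Sum>q\<le>ell. \<Sum>a\<le>ell.
      \<iota> (struct_const i p a) * \<iota> (struct_const a q n) * x i * y p * z q)"
    by (rule sum_swap_4)
  also have "\<dots> = (\<Sum>i\<le>ell. \<Sum>p\<le>ell. \<Sum>q\<le>ell.
      x i * y p * z q * \<iota> (\<Sum>a\<le>ell. struct_const i p a * struct_const a q n))"
    by (simp add: iota_sum iota_mult sum_distrib_left mult_ac)
  also have "\<dots> = (\<Sum>i\<le>ell. \<Sum>p\<le>ell. \<Sum>q\<le>ell.
      x i * y p * z q * \<iota> (\<Sum>a\<le>ell. struct_const p q a * struct_const i a n))"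
    by (intro sum.cong refl) (simp add: struct_const_assoc)
  also have "\<dots> = (\<Sum>i\<le>ell. \<Sum>p\<le>ell. \<Sum>q\<le>ell. \<Sum>a\<le>ell.
      \<iota> (struct_const p q a) * \<iota> (struct_const i a n) * x i * y p * z q)"
    by (simp add: iota_sum iota_mult sum_distrib_left mult_ac)
  also have "\<dots> = (\<Sum>i\<le>ell. \<Sum>a\<le>ell. \<Sum>p\<le>ell. \<Sum>q\<le>ell.
      \<iota> (struct_const p q a) * \<iota> (struct_const i a n) * x i * y p * z q)"
    by (rule sum.cong[OF refl], rule sum_rotate_3[symmetric])
  also have "\<dots> = (x \<odot> (y \<odot> z)) n"
    by (simp add: D_mult_eq sum_distrib_left sum_distrib_right mult_ac)
  finally show "(x \<odot> y \<odot> z) n = (x \<odot> (y \<odot> z)) n" .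
qed

lemma D_mult_left_commute: "x \<odot> (y \<odot> z) = y \<odot> (x \<odot> z)"
  by (metis D_mult_assoc D_mult_comm)

lemma D_mult_closed: "x \<odot> y \<in> D_carrier ell"
  by (simp add: D_carrier_def D_mult_eq struct_const_eq_0 iota_0)

lemma D1_closed: "D1 \<in> D_carrier ell"
  by (simp add: D_carrier_def D_one_def coord_eq_0 iota_0)

lemma D1_mult: "x \<in> D_carrier ell \<Longrightarrow> D1 \<odot> x = x"
proof
  fix n assume x: "x \<in> D_carrier ell"
  have "(D1 \<odot> x) n = (\<Sum>j\<le>ell. x j * \<iota> (\<Sum>i\<le>ell. coord 1 i * struct_const i j n))"
    unfolding D_mult_eq D_one_def
    by (subst sum.swap) (simp add: iota_sum iota_mult sum_distrib_left mult_ac)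
  also have "\<dots> = (\<Sum>j\<le>ell. of_bool (j = n) * x j)"
    by (intro sum.cong refl) (auto simp: coord_one_struct_const iota_of_bool)
  also have "\<dots> = x n"
    using x by (cases "n \<le> ell") (auto simp: D_carrier_def)
  finally show "(D1 \<odot> x) n = x n" .
qed

lemma mult_D1: "x \<in> D_carrier ell \<Longrightarrow> x \<odot> D1 = x"
  by (metis D_mult_comm D1_mult)

lemma D_mult_0: "x \<odot> (\<lambda>_. 0) = (\<lambda>_. 0)"
  by (rule ext) (simp add: D_mult_eq)

lemma D_add_closed: "x \<in> D_carrier ell \<Longrightarrow> y \<in> D_carrier ell \<Longrightarrow> D_add x y \<in> D_carrier ell"
  by (simp add: D_carrier_def D_add_def)

lemma D_add_mult: "D_add x y \<odot> z = D_add (x \<odot> z) (y \<odot> z)"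
  by (rule ext) (simp add: D_mult_eq D_add_def distrib_left distrib_right sum.distrib)

lemma D_der_closed: "is_k_derivation \<iota> \<delta> \<Longrightarrow> x \<in> D_carrier ell \<Longrightarrow> D_der \<delta> x \<in> D_carrier ell"
  by (simp add: D_der_def D_carrier_def derivation_0)

lemma D_der_mult:
  assumes \<delta>: "is_k_derivation \<iota> \<delta>"
  shows "D_der \<delta> (x \<odot> y) = D_add (x \<odot> D_der \<delta> y) (D_der \<delta> x \<odot> y)"
proof
  fix n
  have "D_der \<delta> (x \<odot> y) n = (\<Sum>i\<le>ell. \<Sum>j\<le>ell. \<delta> (\<iota> (struct_const i j n) * (x i * y j)))"
    by (simp add: D_der_def D_mult_eq derivation_sum[OF \<delta>] mult.assoc)
  also have "\<dots> = (\<Sum>i\<le>ell. \<Sum>j\<le>ell. \<iota> (struct_const i j n) * x i * \<delta> (y j)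
                                    + \<iota> (struct_const i j n) * \<delta> (x i) * y j)"
    by (intro sum.cong refl)
      (subst derivation_scalar[OF \<delta>], subst derivation_mult[OF \<delta>], simp add: algebra_simps)
  also have "\<dots> = D_add (x \<odot> D_der \<delta> y) (D_der \<delta> x \<odot> y) n"
    by (simp add: D_add_def D_mult_eq D_der_def sum.distrib)
  finally show "D_der \<delta> (x \<odot> y) n = D_add (x \<odot> D_der \<delta> y) (D_der \<delta> x \<odot> y) n" .
qed

definition D_scale :: "'L \<Rightarrow> (nat \<Rightarrow> 'L) \<Rightarrow> nat \<Rightarrow> 'L" where
  "D_scale a z = (\<lambda>n. a * z n)"

lemma D_scale_mult: "D_scale a x \<odot> z = D_scale a (x \<odot> z)"
  by (rule ext) (simp add: D_mult_eq D_scale_def sum_distrib_left mult_ac)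

lemma D_scale_closed: "z \<in> D_carrier ell \<Longrightarrow> D_scale a z \<in> D_carrier ell"
  by (simp add: D_scale_def D_carrier_def)

definition D_of_B :: "'b \<Rightarrow> nat \<Rightarrow> 'L" where
  "D_of_B b = (\<lambda>n. \<iota> (coord b n))"

lemma D_of_B_closed: "D_of_B b \<in> D_carrier ell"
  by (simp add: D_of_B_def D_carrier_def coord_eq_0 iota_0)

lemma D_of_B_0: "D_of_B 0 = (\<lambda>_. 0)"
  by (simp add: D_of_B_def coord_0 iota_0)

lemma D_of_B_1: "D_of_B 1 = D1"
  by (simp add: D_of_B_def D_one_def)

lemma D_of_B_add: "D_of_B (x + y) = D_add (D_of_B x) (D_of_B y)"
  by (rule ext) (simp add: D_of_B_def D_add_def coord_add iota_add)

lemma D_of_B_mult: "D_of_B (x * y) = D_of_B x \<odot> D_of_B y"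
  by (rule ext) (simp add: D_of_B_def D_mult_eq coord_mult iota_sum iota_mult mult_ac)

lemma D_of_B_sB: "D_of_B (sB c x) = D_scale (\<iota> c) (D_of_B x)"
  by (rule ext) (simp add: D_of_B_def D_scale_def coord_sB iota_mult)

lemma D_of_B_uminus: "D_of_B (- x) = D_scale (- 1) (D_of_B x)"
  by (metis D_of_B_sB iota_1 iota_minus sB_one vs.scale_minus_left)

lemma D_of_B_eps_minus_scalar:
  "i \<le> ell \<Longrightarrow> D_of_B (eps i - sB c 1) n = of_bool (n = i) - \<iota> c * D1 n"
  by (simp add: D_of_B_def D_one_def coord_diff coord_sB coord_eps iota_diff iota_mult iota_of_bool)

definition is_D_ideal :: "(nat \<Rightarrow> 'L) set \<Rightarrow> bool" where
  "is_D_ideal J \<longleftrightarrow> J \<subseteq> D_carrier ell \<and> (\<lambda>_. 0) \<in> J \<and> (\<forall>a\<in>J. \<forall>b\<in>J. D_add a b \<in> J)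
      \<and> (\<forall>a\<in>J. \<forall>r\<in>D_carrier ell. r \<odot> a \<in> J)"

definition is_prime_D_ideal :: "(nat \<Rightarrow> 'L) set \<Rightarrow> bool" where
  "is_prime_D_ideal M \<longleftrightarrow> is_D_ideal M \<and> D1 \<notin> M \<and>
      (\<forall>a\<in>D_carrier ell. \<forall>b\<in>D_carrier ell. a \<odot> b \<in> M \<longrightarrow> a \<in> M \<or> b \<in> M)"

lemma D_ideal_scale: "is_D_ideal J \<Longrightarrow> z \<in> J \<Longrightarrow> D_scale a z \<in> J"
  unfolding is_D_ideal_def
  by (metis D1_closed D1_mult D_scale_closed D_scale_mult subsetD)

lemma D_ideal_sum:
  assumes J: "is_D_ideal J" and f: "\<And>i. i \<in> A \<Longrightarrow> f i \<in> J"
  shows "(\<lambda>n. \<Sum>i\<in>A. f i n) \<in> J"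
  using f
proof (induction A rule: infinite_finite_induct)
  case (insert x F)
  have "(\<lambda>n. \<Sum>i\<in>insert x F. f i n) = D_add (f x) (\<lambda>n. \<Sum>i\<in>F. f i n)"
    using insert.hyps by (simp add: D_add_def)
  then show ?case using insert J unfolding is_D_ideal_def by simp
qed (use J in \<open>simp_all add: is_D_ideal_def\<close>)

lemma principal_D_ideal: "y \<in> D_carrier ell \<Longrightarrow> is_D_ideal {z \<odot> y | z. z \<in> D_carrier ell}"
  unfolding is_D_ideal_def
proof (intro conjI ballI)
  show "(\<lambda>_. 0) \<in> {z \<odot> y | z. z \<in> D_carrier ell}"
    by (intro CollectI exI[of _ "\<lambda>_. 0"]) (auto simp: D_mult_eq D_carrier_def)
  fix a b assume "a \<in> {z \<odot> y | z. z \<in> D_carrier ell}" "b \<in> {z \<odot> y | z. z \<in> D_carrier ell}"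
  then obtain z z' where "z \<in> D_carrier ell" "z' \<in> D_carrier ell" "a = z \<odot> y" "b = z' \<odot> y"
    by blast
  then show "D_add a b \<in> {z \<odot> y | z. z \<in> D_carrier ell}"
    by (metis (mono_tags, lifting) D_add_closed D_add_mult mem_Collect_eq)
next
  fix a r :: "nat \<Rightarrow> 'L" assume "a \<in> {z \<odot> y | z. z \<in> D_carrier ell}" "r \<in> D_carrier ell"
  then show "r \<odot> a \<in> {z \<odot> y | z. z \<in> D_carrier ell}"
    using D_mult_closed by (auto simp: D_mult_assoc[symmetric])
qed (auto simp: D_mult_closed)

lemma D_ideal_Union_chain:
  fixes C :: "(nat \<Rightarrow> 'L) set set"
  assumes "C \<noteq> {}" "\<And>J. J \<in> C \<Longrightarrow> is_D_ideal J" "\<forall>X\<in>C. \<forall>Y\<in>C. X \<subseteq> Y \<or> Y \<subseteq> X"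
  shows "is_D_ideal (\<Union>C)"
  unfolding is_D_ideal_def
proof (intro conjI ballI)
  fix a b assume "a \<in> \<Union>C" "b \<in> \<Union>C"
  then obtain X where "X \<in> C" "a \<in> X" "b \<in> X"
    using assms(3) by blast
  then show "D_add a b \<in> \<Union>C"
    using assms(2) unfolding is_D_ideal_def by blast
next
  fix a r :: "nat \<Rightarrow> 'L" assume "a \<in> \<Union>C" "r \<in> D_carrier ell"
  then show "r \<odot> a \<in> \<Union>C"
    using assms(2) unfolding is_D_ideal_def by blast
qed (use assms(1,2) in \<open>fastforce simp: is_D_ideal_def\<close>)+

lemma maximal_D_ideal_exists:
  assumes "is_D_ideal I" "D1 \<notin> I"
  obtains M where "is_D_ideal M" "I \<subseteq> M" "D1 \<notin> M"
    "\<And>J. is_D_ideal J \<Longrightarrow> M \<subseteq> J \<Longrightarrow> D1 \<notin> J \<Longrightarrow> J = M"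
proof -
  define A where "A = {J. is_D_ideal J \<and> I \<subseteq> J \<and> D1 \<notin> J}"
  have "\<exists>M\<in>A. \<forall>J\<in>A. M \<subseteq> J \<longrightarrow> J = M"
  proof (rule Zorn_Lemma2, intro ballI)
    fix C assume C: "C \<in> chains A"
    show "\<exists>U\<in>A. \<forall>X\<in>C. X \<subseteq> U"
    proof (cases "C = {}")
      case True
      then show ?thesis using assms by (auto simp: A_def)
    next
      case False
      then have "\<Union>C \<in> A"
        using C D_ideal_Union_chain[of C] by (auto simp: A_def chains_def chain_subset_def)
      then show ?thesis by blast
    qed
  qed
  then show ?thesis using that by (auto simp: A_def)
qed

lemma maximal_D_ideal_prime:
  assumes M: "is_D_ideal M" "D1 \<notin> M"
    and max: "\<And>J. is_D_ideal J \<Longrightarrow> M \<subseteq> J \<Longrightarrow> D1 \<notin> J \<Longrightarrow> J = M"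
  shows "is_prime_D_ideal M"
  unfolding is_prime_D_ideal_def
proof (intro conjI ballI impI M)
  fix a b assume a: "a \<in> D_carrier ell" and b: "b \<in> D_carrier ell" and ab: "a \<odot> b \<in> M"
  define J where "J = {x \<in> D_carrier ell. a \<odot> x \<in> M}"
  have "is_D_ideal J"
    unfolding is_D_ideal_def J_def
  proof (intro conjI ballI)
    show "(\<lambda>_. 0) \<in> {x \<in> D_carrier ell. a \<odot> x \<in> M}"
      using M(1) by (simp add: D_carrier_def D_mult_0 is_D_ideal_def)
    fix u v assume "u \<in> {x \<in> D_carrier ell. a \<odot> x \<in> M}" "v \<in> {x \<in> D_carrier ell. a \<odot> x \<in> M}"
    then show "D_add u v \<in> {x \<in> D_carrier ell. a \<odot> x \<in> M}"
      using M(1) D_add_mult[of u v a] by (auto simp: is_D_ideal_def D_carrier_def D_add_def D_mult_comm)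
  next
    fix u r :: "nat \<Rightarrow> 'L" assume "u \<in> {x \<in> D_carrier ell. a \<odot> x \<in> M}" "r \<in> D_carrier ell"
    then show "r \<odot> u \<in> {x \<in> D_carrier ell. a \<odot> x \<in> M}"
      using M(1) D_mult_closed by (auto simp: is_D_ideal_def D_mult_left_commute[of a r])
  qed auto
  moreover have "M \<subseteq> J"
    using M(1) a unfolding J_def is_D_ideal_def by (auto simp: D_mult_comm)
  moreover have "D1 \<notin> J \<or> a \<in> M"
    using a by (auto simp: J_def mult_D1)
  ultimately have "J = M \<or> a \<in> M"
    using max by blast
  then show "a \<in> M \<or> b \<in> M"
    using ab b by (auto simp: J_def)
qed

lemma prime_D_ideal_containing:
  assumes "is_D_ideal I" "D1 \<notin> I"
  shows "\<exists>M. is_prime_D_ideal M \<and> I \<subseteq> M"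
proof -
  obtain M where "is_D_ideal M" "I \<subseteq> M" "D1 \<notin> M"
    "\<And>J. is_D_ideal J \<Longrightarrow> M \<subseteq> J \<Longrightarrow> D1 \<notin> J \<Longrightarrow> J = M"
    using maximal_D_ideal_exists[OF assms] by blast
  then show ?thesis using maximal_D_ideal_prime by blast
qed

lemma prime_D_ideal_pullback:
  assumes M: "is_prime_D_ideal M"
  shows "is_prime_ideal {b. D_of_B b \<in> M}"
proof -
  have J: "is_D_ideal M" using M by (simp add: is_prime_D_ideal_def)
  then show ?thesis
    using M D_of_B_closed D_ideal_scale[OF J]
    unfolding is_prime_ideal_def is_ring_ideal_def is_prime_D_ideal_def is_D_ideal_def
    by (simp add: D_of_B_0 D_of_B_1 D_of_B_add D_of_B_mult D_of_B_uminus)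
qed

text \<open>If \<open>b - \<phi> b \<in> M\<close> for all \<open>b \<in> B\<close>, then modulo \<open>M\<close> every \<open>y = \<Sum> eps i \<otimes> y i\<close> is congruent
  to \<open>\<Sum> \<phi> (eps i) y i = \<phi>\<^sup>L y\<close>.\<close>
lemma base_change_scale_in_ideal:
  assumes M: "is_D_ideal M" and y: "y \<in> M"
    and res: "\<And>b. D_of_B (b - sB (\<phi> b) 1) \<in> M"
  shows "D_scale (base_change \<iota> eps ell \<phi> y) D1 \<in> M"
proof -
  have y_carrier: "y \<in> D_carrier ell" using M y by (auto simp: is_D_ideal_def)
  define Z where "Z = (\<lambda>n. \<Sum>i\<le>ell. D_scale (y i) (D_of_B (eps i - sB (\<phi> (eps i)) 1)) n)"
  have "Z \<in> M"
    unfolding Z_def by (intro D_ideal_sum[OF M] D_ideal_scale[OF M] res)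
  then have "D_add y (D_scale (- 1) Z) \<in> M"
    using M y D_ideal_scale[OF M] by (simp add: is_D_ideal_def)
  moreover have "Z n = y n - base_change \<iota> eps ell \<phi> y * D1 n" for n
  proof -
    have "Z n = (\<Sum>i\<le>ell. of_bool (n = i) * y i - \<iota> (\<phi> (eps i)) * y i * D1 n)"
      unfolding Z_def D_scale_def
      by (intro sum.cong refl) (simp add: D_of_B_eps_minus_scalar algebra_simps)
    also have "\<dots> = (\<Sum>i\<le>ell. of_bool (n = i) * y i) - (\<Sum>i\<le>ell. \<iota> (\<phi> (eps i)) * y i) * D1 n"
      by (simp add: sum_subtractf sum_distrib_right)
    also have "(\<Sum>i\<le>ell. of_bool (n = i) * y i) = y n"
      using y_carrier by (cases "n \<le> ell") (auto simp: D_carrier_def)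
    finally show ?thesis by (simp add: base_change_def)
  qed
  then have "D_add y (D_scale (- 1) Z) = D_scale (base_change \<iota> eps ell \<phi> y) D1"
    by (simp add: fun_eq_iff D_add_def D_scale_def)
  ultimately show ?thesis by simp
qed

definition D_unit :: "(nat \<Rightarrow> 'L) \<Rightarrow> bool" where
  "D_unit u \<longleftrightarrow> u \<in> D_carrier ell \<and> (\<exists>z\<in>D_carrier ell. z \<odot> u = D1)"

lemma D_unit_if_base_change_nonzero:
  assumes B_residue: "\<forall>n. is_maximal_ideal n \<longrightarrow> (\<forall>b. \<exists>c. b - sB c 1 \<in> n)"
    and y: "y \<in> D_carrier ell"
    and nz: "\<And>\<phi>. is_k_alg_hom sB \<phi> \<Longrightarrow> base_change \<iota> eps ell \<phi> y \<noteq> 0"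
  shows "D_unit y"
proof (rule ccontr)
  assume "\<not> D_unit y"
  then have "D1 \<notin> {z \<odot> y | z. z \<in> D_carrier ell}"
    using y by (auto simp: D_unit_def)
  then obtain M where M: "is_prime_D_ideal M" "{z \<odot> y | z. z \<in> D_carrier ell} \<subseteq> M"
    using prime_D_ideal_containing[OF principal_D_ideal[OF y]] by blast
  have "D1 \<odot> y \<in> M"
    using M(2) D1_closed by blast
  then have "y \<in> M"
    by (simp add: D1_mult[OF y])
  define P where "P = {b. D_of_B b \<in> M}"
  have P: "is_prime_ideal P"
    unfolding P_def by (rule prime_D_ideal_pullback[OF M(1)])
  then have res: "\<forall>b. \<exists>c. b - sB c 1 \<in> P"
    using B_residue prime_ideal_is_maximal by blast
  have P_proper: "is_ring_ideal P" "1 \<notin> P"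
    using P by (auto simp: is_prime_ideal_def)
  obtain \<phi> where \<phi>: "is_k_alg_hom sB \<phi>" "\<forall>b. b - sB (\<phi> b) 1 \<in> P"
    using residue_map_exists[OF P_proper res] by blast
  have ideal: "is_D_ideal M" "D1 \<notin> M"
    using M(1) by (auto simp: is_prime_D_ideal_def)
  define c where "c = base_change \<iota> eps ell \<phi> y"
  have "D_scale c D1 \<in> M"
    unfolding c_def using base_change_scale_in_ideal[OF ideal(1) \<open>y \<in> M\<close>] \<phi>(2)
    by (simp add: P_def)
  then have "D_scale (inverse c) (D_scale c D1) \<in> M"
    by (rule D_ideal_scale[OF ideal(1)])
  moreover have "D_scale (inverse c) (D_scale c D1) = D1"
    using nz[OF \<phi>(1)] by (simp add: c_def D_scale_def mult.assoc[symmetric])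
  ultimately show False using ideal(2) by simp
qed

definition D_inverse :: "(nat \<Rightarrow> 'L) \<Rightarrow> nat \<Rightarrow> 'L" where
  "D_inverse u = (SOME z. z \<in> D_carrier ell \<and> z \<odot> u = D1)"

lemma D_unit_inverse: "D_unit u \<Longrightarrow> D_inverse u \<in> D_carrier ell \<and> D_inverse u \<odot> u = D1"
  using someI_ex[of "\<lambda>z. z \<in> D_carrier ell \<and> z \<odot> u = D1"] unfolding D_unit_def D_inverse_def by blast

lemma D_unit_cancel:
  assumes u: "D_unit u" and x: "x \<in> D_carrier ell" and y: "y \<in> D_carrier ell"
    and eq: "x \<odot> u = y \<odot> u"
  shows "x = y"
proof -
  have "x \<odot> u \<odot> D_inverse u = y \<odot> u \<odot> D_inverse u" using eq by simp
  then show ?thesis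
    using D_unit_inverse[OF u] x y by (simp add: D_mult_assoc D_mult_comm[of u] mult_D1)
qed

end

section \<open>Extension to the fraction field\<close>

lemma Frac_in_iff: "q \<in> Frac_in R \<longleftrightarrow> (\<exists>b\<in>R. b \<noteq> 0 \<and> q * b \<in> R)"
proof
  assume "q \<in> Frac_in R"
  then show "\<exists>b\<in>R. b \<noteq> 0 \<and> q * b \<in> R" by (auto simp: Frac_in_def)
next
  assume "\<exists>b\<in>R. b \<noteq> 0 \<and> q * b \<in> R"
  then obtain b where "b \<in> R" "b \<noteq> 0" "q * b \<in> R" by blast
  then show "q \<in> Frac_in R"
    unfolding Frac_in_def by (intro CollectI exI[of _ "q * b"] exI[of _ b]) simp
qed

locale nondegenerate_Delta_hom = base_change_ring sB eps ell \<iota>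
  for sB :: "'k::field \<Rightarrow> 'b::comm_ring_1 \<Rightarrow> 'b" and eps ell and \<iota> :: "'k \<Rightarrow> 'L::field" +
  fixes m :: nat and d :: "nat \<Rightarrow> 'L \<Rightarrow> 'L" and R :: "'L set" and e :: "'L \<Rightarrow> nat \<Rightarrow> 'L"
  assumes B_residue: "\<forall>n. is_maximal_ideal n \<longrightarrow> (\<forall>b. \<exists>c. b - sB c 1 \<in> n)"
    and L_Delta: "is_k_Delta_field \<iota> m d"
    and R_sub: "is_Delta_subring_over_k \<iota> m d R"
    and e_hom: "is_Delta_hom_to_D \<iota> sB eps ell m d R e"
    and e_inj: "\<forall>\<phi>. is_k_alg_hom sB \<phi> \<longrightarrow> inj_on (\<lambda>r. base_change \<iota> eps ell \<phi> (e r)) R"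
begin

lemma R_0: "0 \<in> R" and R_1: "1 \<in> R" and R_add: "x \<in> R \<Longrightarrow> y \<in> R \<Longrightarrow> x + y \<in> R"
  and R_mult: "x \<in> R \<Longrightarrow> y \<in> R \<Longrightarrow> x * y \<in> R" and R_uminus: "x \<in> R \<Longrightarrow> - x \<in> R"
  and R_der: "j < m \<Longrightarrow> x \<in> R \<Longrightarrow> d j x \<in> R"
  using R_sub by (auto simp: is_Delta_subring_over_k_def)

lemma R_diff: "x \<in> R \<Longrightarrow> y \<in> R \<Longrightarrow> x - y \<in> R"
  using R_add R_uminus by (metis diff_conv_add_uminus)

lemma R_subset_Frac_in: "r \<in> R \<Longrightarrow> r \<in> Frac_in R"
  unfolding Frac_in_iff using R_1 by (metis mult_1_right zero_neq_one)

lemma e_closed: "x \<in> R \<Longrightarrow> e x \<in> D_carrier ell"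
  and e_add: "x \<in> R \<Longrightarrow> y \<in> R \<Longrightarrow> e (x + y) = D_add (e x) (e y)"
  and e_mult: "x \<in> R \<Longrightarrow> y \<in> R \<Longrightarrow> e (x * y) = e x \<odot> e y"
  and e_1: "e 1 = D1"
  and e_der: "j < m \<Longrightarrow> x \<in> R \<Longrightarrow> e (d j x) = D_der (d j) (e x)"
  using e_hom by (auto simp: is_Delta_hom_to_D_def)

lemma e_0: "e 0 = (\<lambda>_. 0)"
proof
  fix n
  have "e 0 n = e 0 n + e 0 n"
    using e_add[OF R_0 R_0] by (metis D_add_def add_0)
  then show "e 0 n = 0" by (simp only: add_cancel_right_right)
qed

lemma e_unit: "r \<in> R \<Longrightarrow> r \<noteq> 0 \<Longrightarrow> D_unit (e r)"
proof (rule D_unit_if_base_change_nonzero[OF B_residue e_closed])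
  fix \<phi> assume r: "r \<in> R" "r \<noteq> 0" and \<phi>: "is_k_alg_hom sB \<phi>"
  have "base_change \<iota> eps ell \<phi> (e 0) = 0"
    by (simp add: e_0 base_change_def)
  then show "base_change \<iota> eps ell \<phi> (e r) \<noteq> 0"
    using e_inj \<phi> r R_0 unfolding inj_on_def by metis
qed

definition frac_ext :: "'L \<Rightarrow> nat \<Rightarrow> 'L" where
  "frac_ext q = (let p = (SOME p. fst p \<in> R \<and> snd p \<in> R \<and> snd p \<noteq> 0 \<and> q = fst p / snd p)
                 in e (fst p) \<odot> D_inverse (e (snd p)))"

lemma frac_ext_closed: "frac_ext q \<in> D_carrier ell"
  by (simp add: frac_ext_def Let_def D_mult_closed)

lemma frac_ext_mult_e:
  assumes q: "q \<in> Frac_in R" and b: "b \<in> R" "b \<noteq> 0" "q * b \<in> R"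
  shows "frac_ext q \<odot> e b = e (q * b)"
proof -
  define p where "p = (SOME p. fst p \<in> R \<and> snd p \<in> R \<and> snd p \<noteq> 0 \<and> q = fst p / snd p)"
  have "\<exists>p. fst p \<in> R \<and> snd p \<in> R \<and> snd p \<noteq> 0 \<and> q = fst p / snd p"
    using q by (auto simp: Frac_in_def)
  then have p: "fst p \<in> R" "snd p \<in> R" "snd p \<noteq> 0" "q = fst p / snd p"
    unfolding p_def by (metis (mono_tags, lifting) someI_ex)+
  have "fst p * b = (q * b) * snd p"
    using p(3,4) by simp
  then have eq: "e (fst p) \<odot> e b = e (q * b) \<odot> e (snd p)"
    using e_mult p b by metis
  have "frac_ext q \<odot> e b = e (fst p) \<odot> e b \<odot> D_inverse (e (snd p))"
    unfolding frac_ext_def p_def[symmetric] Let_def by (simp add: D_mult_assoc D_mult_comm[of "D_inverse _"])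
  also have "\<dots> = e (q * b) \<odot> (e (snd p) \<odot> D_inverse (e (snd p)))"
    unfolding eq by (simp add: D_mult_assoc)
  also have "\<dots> = e (q * b)"
    using D_unit_inverse[OF e_unit[OF p(2,3)]] e_closed[OF b(3)] by (simp add: D_mult_comm[of "e (snd p)"] mult_D1)
  finally show ?thesis .
qed

lemma frac_ext_unique:
  assumes q: "q \<in> Frac_in R" and b: "b \<in> R" "b \<noteq> 0" "q * b \<in> R"
    and z: "z \<in> D_carrier ell" "z \<odot> e b = e (q * b)"
  shows "frac_ext q = z"
  using D_unit_cancel[OF e_unit[OF b(1,2)] frac_ext_closed z(1)] frac_ext_mult_e[OF q b] z(2) by simp

lemma frac_ext_extends: "r \<in> R \<Longrightarrow> frac_ext r = e r"
  using frac_ext_unique[OF R_subset_Frac_in R_1, of r "e r"] e_closed e_1 by (simp add: mult_D1)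

lemma Frac_in_common_denominator:
  assumes x: "x \<in> Frac_in R" and y: "y \<in> Frac_in R"
  obtains b where "b \<in> R" "b \<noteq> 0" "x * b \<in> R" "y * b \<in> R"
proof -
  obtain b c where bc: "b \<in> R" "b \<noteq> 0" "x * b \<in> R" "c \<in> R" "c \<noteq> 0" "y * c \<in> R"
    using x y by (meson Frac_in_iff)
  have "x * (b * c) \<in> R"
    using R_mult[OF bc(3,4)] by (simp add: mult.assoc)
  moreover have "y * (b * c) \<in> R"
    using R_mult[OF bc(6,1)] by (simp add: ac_simps)
  moreover have "b * c \<in> R" "b * c \<noteq> 0"
    using bc R_mult by simp_all
  ultimately show thesis
    using that by blast
qed

lemma frac_ext_add:
  assumes x: "x \<in> Frac_in R" and y: "y \<in> Frac_in R"
  shows "x + y \<in> Frac_in R \<and> frac_ext (x + y) = D_add (frac_ext x) (frac_ext y)"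
proof -
  obtain b where b: "b \<in> R" "b \<noteq> 0" "x * b \<in> R" "y * b \<in> R"
    using Frac_in_common_denominator[OF x y] .
  have xyb: "(x + y) * b \<in> R" "(x + y) * b = x * b + y * b"
    using b R_add by (simp_all add: distrib_right)
  then have xy: "x + y \<in> Frac_in R"
    using b Frac_in_iff by blast
  have "D_add (frac_ext x) (frac_ext y) \<odot> e b = e ((x + y) * b)"
    using b by (simp add: D_add_mult frac_ext_mult_e x y xyb(2) e_add)
  then show ?thesis
    using frac_ext_unique[OF xy b(1,2) xyb(1) D_add_closed[OF frac_ext_closed frac_ext_closed]] xy
    by simp
qed

lemma frac_ext_mult:
  assumes x: "x \<in> Frac_in R" and y: "y \<in> Frac_in R"
  shows "x * y \<in> Frac_in R \<and> frac_ext (x * y) = frac_ext x \<odot> frac_ext y"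
proof -
  obtain b where b: "b \<in> R" "b \<noteq> 0" "x * b \<in> R" "y * b \<in> R"
    using Frac_in_common_denominator[OF x y] .
  have bb: "b * b \<in> R" "b * b \<noteq> 0"
    using b R_mult by simp_all
  have xybb: "(x * y) * (b * b) = (x * b) * (y * b)"
    by (simp add: ac_simps)
  then have "(x * y) * (b * b) \<in> R"
    using b R_mult by metis
  then have xy: "x * y \<in> Frac_in R"
    using bb Frac_in_iff by blast
  have "frac_ext x \<odot> frac_ext y \<odot> e (b * b) = (frac_ext x \<odot> e b) \<odot> (frac_ext y \<odot> e b)"
    using b by (simp add: e_mult D_mult_assoc D_mult_left_commute)
  also have "\<dots> = e ((x * y) * (b * b))"
    using b by (simp add: frac_ext_mult_e x y xybb e_mult)
  finally show ?thesis
    using frac_ext_unique[OF xy bb \<open>(x * y) * (b * b) \<in> R\<close>] xy D_mult_closed by simp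
qed

text \<open>With \<open>x = a / b\<close>, differentiate \<open>frac_ext x \<odot> e b = e a\<close> and multiply by \<open>e b\<close>; the quotient
  rule \<open>\<delta> x * b\<^sup>2 + a * \<delta> b = b * \<delta> a\<close> identifies the result.\<close>
lemma frac_ext_der:
  assumes x: "x \<in> Frac_in R" and j: "j < m"
  shows "d j x \<in> Frac_in R \<and> frac_ext (d j x) = D_der (d j) (frac_ext x)"
proof -
  have \<delta>: "is_k_derivation \<iota> (d j)"
    using is_k_Delta_field_derivation[OF L_Delta j] .
  obtain b where b: "b \<in> R" "b \<noteq> 0" "x * b \<in> R"
    using x Frac_in_iff by blast
  define a where "a = x * b"
  have a: "a \<in> R" "d j a \<in> R" "d j b \<in> R" "a * d j b \<in> R"
    using b R_der[OF j] R_mult by (simp_all add: a_def)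
  have quot: "a * d j b + d j x * (b * b) = b * d j a"
    using derivation_quotient[OF \<delta> b(2), of a] b(2) by (simp add: a_def algebra_simps)
  have bb: "b * b \<in> R" "b * b \<noteq> 0"
    using b R_mult by simp_all
  have dxbb: "d j x * (b * b) \<in> R"
    using quot R_diff R_mult a b(1) by (metis add_diff_cancel_left')
  then have dx: "d j x \<in> Frac_in R"
    using bb Frac_in_iff by blast
  have xb: "frac_ext x \<odot> e b = e a"
    using frac_ext_mult_e[OF x b] by (simp add: a_def)
  then have "D_add (frac_ext x \<odot> e (d j b)) (D_der (d j) (frac_ext x) \<odot> e b) = e (d j a)"
    using D_der_mult[OF \<delta>, of "frac_ext x" "e b"] by (simp add: e_der[OF j] b(1) a)
  then have "D_add (frac_ext x \<odot> e (d j b) \<odot> e b) (D_der (d j) (frac_ext x) \<odot> e b \<odot> e b)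
      = e (d j a) \<odot> e b"
    by (metis D_add_mult)
  moreover have "frac_ext x \<odot> e (d j b) \<odot> e b = e (a * d j b)"
    using xb e_mult[OF a(1,3)] by (metis D_mult_assoc D_mult_comm)
  ultimately have "D_add (e (a * d j b)) (D_der (d j) (frac_ext x) \<odot> e (b * b)) = e (b * d j a)"
    using e_mult[OF a(2) b(1)] by (simp add: D_mult_assoc e_mult b(1) mult.commute)
  also have "\<dots> = D_add (e (a * d j b)) (e (d j x * (b * b)))"
    using e_add[OF a(4) dxbb] by (simp add: quot)
  finally have "D_der (d j) (frac_ext x) \<odot> e (b * b) = e (d j x * (b * b))"
    by (rule D_add_left_cancel)
  then show ?thesis
    using frac_ext_unique[OF dx bb dxbb] D_der_closed[OF \<delta> frac_ext_closed] dx by simp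
qed

lemma frac_ext_is_Delta_hom: "is_Delta_hom_to_D \<iota> sB eps ell m d (Frac_in R) frac_ext"
  unfolding is_Delta_hom_to_D_def
  using frac_ext_closed frac_ext_add frac_ext_mult frac_ext_extends[OF R_1] e_1 frac_ext_der by auto

lemma Delta_hom_extension_unique:
  assumes g: "is_Delta_hom_to_D \<iota> sB eps ell m d (Frac_in R) g" and gR: "\<forall>r\<in>R. g r = e r"
    and x: "x \<in> Frac_in R"
  shows "g x = frac_ext x"
proof -
  obtain b where b: "b \<in> R" "b \<noteq> 0" "x * b \<in> R"
    using x Frac_in_iff by blast
  have "g (x * b) = g x \<odot> g b" "g x \<in> D_carrier ell"
    using g x R_subset_Frac_in[OF b(1)] by (simp_all add: is_Delta_hom_to_D_def)
  then show ?thesis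
    using frac_ext_unique[OF x b] gR b by simp
qed

end

theorem lemma4p3:
  fixes sB :: "'k::field_char_0 \<Rightarrow> 'b::comm_ring_1 \<Rightarrow> 'b"
    and eps :: "nat \<Rightarrow> 'b" and ell :: nat
    and \<pi> :: "'b \<Rightarrow> 'k"
    and \<iota> :: "'k \<Rightarrow> 'L::field"
    and m :: nat and d :: "nat \<Rightarrow> 'L \<Rightarrow> 'L"
    and R :: "'L set"
    and e :: "'L \<Rightarrow> nat \<Rightarrow> 'L"
  assumes B_alg: "is_k_algebra sB"
    and B_basis: "is_k_basis sB eps ell"
    and B_residue: "\<forall>n. is_maximal_ideal n \<longrightarrow> (\<forall>b. \<exists>c. b - sB c 1 \<in> n)"
    and pi_hom: "is_k_alg_hom sB \<pi>"
    and pi_eps0: "\<pi> (eps 0) = 1"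
    and pi_eps: "\<forall>i. 0 < i \<and> i \<le> ell \<longrightarrow> \<pi> (eps i) = 0"
    and k_in_L: "is_ring_hom \<iota>"
    and L_Delta: "is_k_Delta_field \<iota> m d"
    and R_sub: "is_Delta_subring_over_k \<iota> m d R"
    and e_hom: "is_Delta_hom_to_D \<iota> sB eps ell m d R e"
    and e_klin: "\<forall>c. \<forall>r\<in>R. e (\<iota> c * r) = D_smult \<iota> c (e r)"
    and e_inj: "\<forall>\<phi>. is_k_alg_hom sB \<phi> \<longrightarrow> inj_on (\<lambda>r. base_change \<iota> eps ell \<phi> (e r)) R"
  shows "\<exists>f. is_Delta_hom_to_D \<iota> sB eps ell m d (Frac_in R) f \<and> (\<forall>r\<in>R. f r = e r) \<and>
           (\<forall>g. is_Delta_hom_to_D \<iota> sB eps ell m d (Frac_in R) g \<and> (\<forall>r\<in>R. g r = e r)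
                \<longrightarrow> (\<forall>x\<in>Frac_in R. g x = f x))"
proof -
  interpret nondegenerate_Delta_hom sB eps ell \<iota> m d R e
    using B_alg B_basis k_in_L B_residue L_Delta R_sub e_hom e_inj
    by unfold_locales simp_all
  show ?thesis
    using frac_ext_is_Delta_hom frac_ext_extends Delta_hom_extension_unique by blast
qed

end
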